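(* Let $p\in\mathbb{Z}^d$ with $\gcd(p_1,\dots,p_d)=1$. The problem $\Delta_p g(k)=0$ for $k>0$, $g(0)=1$, $g(k)=0$ for $k<0$, $\sup_{k>0}|g(k)|<\infty$ has a unique solution $g:\mathbb{Z}\to\mathbb{R}$, the limit $\lim_{k\to\infty}g(k)$ exists, and $$H(p)=|p|^2\lim_{k\to\infty}g(k),$$ where $\Delta_p g(k)=\sum_{j=1}^d\big(g(k+p_j)+g(k-p_j)-2g(k)\big)$.
   Context: Discrete Laplacian on $\mathbb{Z}^d$: $\Delta u(x)=\sum_{i=1}^d(u(x+e_i)+u(x-e_i)-2u(x))$. For $p\ne0$, $H(p)=\Delta u_p(0)$ where $u_p$ is the unique solution of $\Delta u=0$ on $\{p\cdot x>0\}$, $u=0$ on $\{p\cdot x\le0\}$, $\sup_{p\cdot x>0}|u(x)-p\cdot x|<\infty$. *)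

theory Defs
  imports "HOL-Analysis.Analysis"
begin

text \<open>Lattice points of Z^d are vectors of type int ^ 'd (d = CARD('d)).\<close>

definition idot :: "int ^ 'd \<Rightarrow> int ^ 'd \<Rightarrow> int" where
  "idot p x = (\<Sum>i\<in>UNIV. p $ i * x $ i)"

definition unitv :: "'d::finite \<Rightarrow> int ^ 'd" where
  "unitv i = (\<chi> j. if j = i then 1 else 0)"

definition dlap :: "(int ^ 'd \<Rightarrow> real) \<Rightarrow> int ^ 'd \<Rightarrow> real" where
  "dlap u x = (\<Sum>i\<in>UNIV. u (x + unitv i) + u (x - unitv i) - 2 * u x)"

definition halfspace_sol :: "int ^ 'd \<Rightarrow> (int ^ 'd \<Rightarrow> real) \<Rightarrow> bool" where
  "halfspace_sol p u \<longleftrightarrow>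
     (\<forall>x. idot p x > 0 \<longrightarrow> dlap u x = 0) \<and>
     (\<forall>x. idot p x \<le> 0 \<longrightarrow> u x = 0) \<and>
     (\<exists>M. \<forall>x. idot p x > 0 \<longrightarrow> \<bar>u x - real_of_int (idot p x)\<bar> \<le> M)"

definition Hfun :: "int ^ 'd \<Rightarrow> real" where
  "Hfun p = dlap (THE u. halfspace_sol p u) 0"

definition dlap1 :: "int ^ 'd \<Rightarrow> (int \<Rightarrow> real) \<Rightarrow> int \<Rightarrow> real" where
  "dlap1 p g k = (\<Sum>j\<in>UNIV. g (k + p $ j) + g (k - p $ j) - 2 * g k)"

definition line_sol :: "int ^ 'd \<Rightarrow> (int \<Rightarrow> real) \<Rightarrow> bool" where
  "line_sol p g \<longleftrightarrow>
     (\<forall>k>0. dlap1 p g k = 0) \<and> g 0 = 1 \<and> (\<forall>k<0. g k = 0) \<and>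
     (\<exists>M. \<forall>k>0. \<bar>g k\<bar> \<le> M)"

end

theory Submission
  imports Defs
begin

text \<open>The half-space solution is a function of \<open>p \<cdot> x\<close> alone: \<open>u\<^sub>p(x) = f(p \<cdot> x)\<close>, where
  \<open>f(k) = k + e(k)\<close> vanishes for \<open>k \<le> 0\<close>, is \<open>\<Delta>\<^sub>p\<close>-harmonic for \<open>k > 0\<close>, and \<open>e\<close> is bounded.
  Such an \<open>e\<close> exists by Perron's method; a Harnack-type decay of its oscillation over consecutive
  windows of length \<open>max |p\<^sub>j|\<close> shows that \<open>e\<close> converges; uniqueness in \<open>\<int>\<^sup>d\<close> follows from a
  maximum principle.  The problem for \<open>g\<close> is solved by the normalised difference quotient
  \<open>g(k) = (f(k + 1) - f(k)) / f(1)\<close>, whose limit is \<open>1 / f(1)\<close>; uniqueness of \<open>g\<close> comes from the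
  maximum principle lifted to \<open>\<int>\<^sup>d\<close> along the map \<open>x \<mapsto> p \<cdot> x\<close>, onto because \<open>gcd p = 1\<close>.
  Finally \<open>H(p) = \<Delta>\<^sub>p f(0)\<close>, and a discrete Wronskian of \<open>f\<close> and \<open>f(\<cdot> + 1)\<close>, constant in
  \<open>k \<ge> 0\<close>, equals \<open>-f(1) \<Delta>\<^sub>p f(0)\<close> at \<open>0\<close> and \<open>-|p|\<^sup>2\<close> at infinity.\<close>

lemma idot_add: "idot p (x + y) = idot p x + idot p y"
  by (simp add: idot_def algebra_simps sum.distrib)

lemma idot_diff: "idot p (x - y) = idot p x - idot p y"
  by (simp add: idot_def algebra_simps sum_subtractf)

lemma idot_uminus: "idot p (- x) = - idot p x"
  by (simp add: idot_def sum_negf)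

lemma idot_zero: "idot p 0 = 0"
  by (simp add: idot_def)

lemma idot_unitv: "idot p (unitv i) = p $ i"
  by (simp add: idot_def unitv_def if_distrib cong: if_cong)

lemma dlap_idot_comp: "dlap (\<lambda>x. h (idot p x)) x = dlap1 p h (idot p x)"
  by (simp add: dlap_def dlap1_def idot_add idot_diff idot_unitv)

lemma dlap_diff: "dlap (\<lambda>x. u x - v x) x = dlap u x - dlap v x"
  unfolding dlap_def sum_subtractf[symmetric] by (rule sum.cong) auto

lemma dlap_diff_idot: "dlap (\<lambda>x. u x - c * real_of_int (idot p x)) x = dlap u x"
  unfolding dlap_def by (rule sum.cong) (auto simp: idot_add idot_diff algebra_simps)

lemma dlap1_affine_comb:
  "dlap1 p (\<lambda>k. a * u k + b * v (k + s) + c) k = a * dlap1 p u k + b * dlap1 p v (k + s)"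
  unfolding dlap1_def sum_distrib_left sum.distrib[symmetric]
  by (rule sum.cong) (auto simp: algebra_simps)

lemma dlap1_add: "dlap1 p (\<lambda>k. u k + v k) k = dlap1 p u k + dlap1 p v k"
  using dlap1_affine_comb[of p 1 u 1 v 0 0 k] by simp

lemma dlap1_diff: "dlap1 p (\<lambda>k. u k - v k) k = dlap1 p u k - dlap1 p v k"
  using dlap1_affine_comb[of p 1 u "-1" v 0 0 k] by simp

lemma dlap1_minus: "dlap1 p (\<lambda>k. - u k) k = - dlap1 p u k"
  using dlap1_affine_comb[of p "-1" u 0 u 0 0 k] by simp

lemma dlap1_const: "dlap1 p (\<lambda>k. c) k = 0"
  by (simp add: dlap1_def)

lemma dlap1_of_int: "dlap1 p real_of_int k = 0"
  by (simp add: dlap1_def)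

lemma dlap1_shift: "dlap1 p (\<lambda>k. u (k + s)) k = dlap1 p u (k + s)"
  by (simp add: dlap1_def algebra_simps)

lemma tendsto_int_shift:
  fixes f :: "int \<Rightarrow> 'a::topological_space"
  assumes "(f \<longlongrightarrow> L) at_top"
  shows "((\<lambda>n. f (n + s)) \<longlongrightarrow> L) at_top"
proof -
  have "filterlim (\<lambda>n. n + s) at_top at_top"
    unfolding filterlim_at_top
  proof
    fix Z :: int
    show "\<forall>\<^sub>F n in at_top. Z \<le> n + s"
      using eventually_ge_at_top[of "Z - s"] by eventually_elim simp
  qed
  from filterlim_compose[OF assms this] show ?thesis .
qed

lemma harnack_neighbour:
  fixes \<phi> :: "int ^ 'd \<Rightarrow> real"
  assumes harm: "dlap \<phi> y = 0"
    and e: "e = unitv j \<or> e = - unitv j"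
    and below: "\<And>i. \<phi> (y + unitv i) \<le> S" "\<And>i. \<phi> (y - unitv i) \<le> S"
  shows "S - \<phi> (y + e) \<le> 2 * real CARD('d) * (S - \<phi> y)"
proof -
  define T where "T i = \<phi> (y + unitv i) + \<phi> (y - unitv i)" for i
  have sumT: "(\<Sum>i\<in>UNIV. T i) = 2 * real CARD('d) * \<phi> y"
  proof -
    have "(\<Sum>i\<in>UNIV. T i - 2 * \<phi> y) = 0" using harm unfolding dlap_def T_def by simp
    then show ?thesis by (simp add: sum_subtractf)
  qed
  have Tj: "T j \<le> \<phi> (y + e) + S"
    using e
  proof
    assume "e = - unitv j"
    then have "y + e = y - unitv j" by simp
    then show ?thesis using below(1)[of j] unfolding T_def by simp
  qed (use below(2)[of j] T_def in simp)
  have "(\<Sum>i\<in>UNIV - {j}. T i) \<le> of_nat (card (UNIV - {j})) * (2 * S)"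
  proof (rule sum_bounded_above)
    fix i show "T i \<le> 2 * S" using below(1)[of i] below(2)[of i] unfolding T_def by linarith
  qed
  then have rest: "(\<Sum>i\<in>UNIV - {j}. T i) \<le> (real CARD('d) - 1) * (2 * S)"
    by (simp add: card_Diff_singleton of_nat_diff)
  have "(\<Sum>i\<in>UNIV. T i) = T j + (\<Sum>i\<in>UNIV - {j}. T i)"
    by (rule sum.remove) auto
  then show ?thesis using sumT Tj rest by (simp add: algebra_simps)
qed

lemma sum_combination_eq_Gcd:
  fixes a :: "'i \<Rightarrow> int"
  assumes "finite S"
  shows "\<exists>c. (\<Sum>j\<in>S. c j * a j) = Gcd (a ` S)"
  using assms
proof (induction S rule: finite_induct)
  case (insert j S)
  then obtain c where c: "(\<Sum>i\<in>S. c i * a i) = Gcd (a ` S)" by blast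
  obtain u v where uv: "u * a j + v * Gcd (a ` S) = gcd (a j) (Gcd (a ` S))"
    using bezout_int by blast
  have "(\<Sum>i\<in>S. (if i = j then u else v * c i) * a i) = v * (\<Sum>i\<in>S. c i * a i)"
    unfolding sum_distrib_left using insert(2) by (intro sum.cong) auto
  then have "(\<Sum>i\<in>insert j S. (if i = j then u else v * c i) * a i) = Gcd (a ` insert j S)"
    using insert(1,2) c uv by simp
  then show ?case by (rule exI[of _ "\<lambda>i. if i = j then u else v * c i"])
qed simp

lemma tendsto_of_shrinking_brackets:
  fixes h :: "int \<Rightarrow> real" and lo hi :: "nat \<Rightarrow> real"
  assumes bracket: "\<And>n k. k > t n \<Longrightarrow> lo n \<le> h k \<and> h k \<le> hi n"
    and shrink: "(\<lambda>n. hi n - lo n) \<longlonglongrightarrow> 0"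
  shows "\<exists>L. (h \<longlongrightarrow> L) at_top"
proof -
  have lo_hi: "lo m \<le> hi n" for m n
    using bracket[of m "max (t m) (t n) + 1"] bracket[of n "max (t m) (t n) + 1"] by linarith
  define L where "L = Sup (range lo)"
  have lo_L: "lo n \<le> L" for n unfolding L_def using lo_hi by (intro cSup_upper bdd_aboveI) auto
  have L_hi: "L \<le> hi n" for n unfolding L_def using lo_hi by (intro cSup_least) auto
  have close: "dist (h k) L \<le> hi n - lo n" if "k > t n" for n k
    using bracket[OF that] lo_L[of n] L_hi[of n] by (auto simp: dist_real_def abs_le_iff)
  have "(h \<longlongrightarrow> L) at_top"
  proof (rule tendstoI)
    fix \<epsilon> :: real assume "\<epsilon> > 0"
    obtain n0 where "\<forall>n\<ge>n0. norm (hi n - lo n - 0) < \<epsilon>"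
      using LIMSEQ_D[OF shrink \<open>\<epsilon> > 0\<close>] by blast
    then have n: "hi n0 - lo n0 < \<epsilon>" by auto
    show "eventually (\<lambda>k. dist (h k) L < \<epsilon>) at_top"
      using eventually_gt_at_top[of "t n0"] by eventually_elim (use close n in fastforce)
  qed
  then show ?thesis by blast
qed

lemma line_sol_profile_quotient:
  assumes f0: "\<And>k. k \<le> 0 \<Longrightarrow> f k = 0" and harm: "\<And>k. k > 0 \<Longrightarrow> dlap1 p f k = 0"
    and bdd: "\<And>k. k > 0 \<Longrightarrow> \<bar>f k - real_of_int k\<bar> \<le> M" and f1: "f 1 \<noteq> 0"
  shows "line_sol p (\<lambda>k. (f (k + 1) - f k) / f 1)"
proof -
  have "(\<lambda>k. (f (k + 1) - f k) / f 1) = (\<lambda>k. (- 1 / f 1) * f k + (1 / f 1) * f (k + 1) + 0)"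
    by (simp add: fun_eq_iff diff_divide_distrib)
  then have "dlap1 p (\<lambda>k. (f (k + 1) - f k) / f 1) k = 0" if "k > 0" for k
    using harm that by (simp only: dlap1_affine_comb)
  moreover have "\<bar>(f (k + 1) - f k) / f 1\<bar> \<le> (2 * M + 1) / \<bar>f 1\<bar>" if "k > 0" for k
  proof -
    have "\<bar>f (k + 1) - f k\<bar> \<le> 2 * M + 1"
      using bdd[of k] bdd[of "k + 1"] that unfolding abs_le_iff by auto
    then show ?thesis using f1 by (simp add: abs_divide divide_right_mono)
  qed
  ultimately show ?thesis unfolding line_sol_def using f0 f1 by auto
qed

lemma profile_quotient_limit:
  assumes lim: "((\<lambda>k. f k - real_of_int k) \<longlongrightarrow> c) at_top"
  shows "((\<lambda>k. (f (k + 1) - f k) / f 1) \<longlongrightarrow> 1 / f 1) at_top"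
proof -
  have "((\<lambda>k. (f (k + 1) - real_of_int (k + 1)) - (f k - real_of_int k) + 1) \<longlongrightarrow> c - c + 1) at_top"
    by (intro tendsto_add tendsto_diff tendsto_const lim tendsto_int_shift[OF lim])
  then have "((\<lambda>k. f (k + 1) - f k) \<longlongrightarrow> 1) at_top" by simp
  from tendsto_mult_right[OF this, of "1 / f 1"] show ?thesis by simp
qed

locale nonzero_slope =
  fixes p :: "int ^ 'd::finite"
  assumes nonzero: "\<exists>j. p $ j \<noteq> 0"
begin

definition q :: "'d \<Rightarrow> int" where "q j = \<bar>p $ j\<bar>"

definition qmax :: int where "qmax = Max (range q)"

lemma q_nonneg: "q j \<ge> 0"
  by (simp add: q_def)

lemma q_le_qmax: "q j \<le> qmax"
  unfolding qmax_def by (rule Max_ge) auto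

lemma qmax_pos: "qmax \<ge> 1"
proof -
  obtain j where "p $ j \<noteq> 0" using nonzero by blast
  then show ?thesis using q_le_qmax[of j] by (simp add: q_def)
qed

lemma coord_squares_pos: "(\<Sum>i\<in>UNIV. (p $ i)^2) > 0"
proof -
  obtain j where "p $ j \<noteq> 0" using nonzero by blast
  then show ?thesis by (intro sum_pos2[of UNIV j]) auto
qed

lemma dlap1_abs: "dlap1 p u k = (\<Sum>j\<in>UNIV. u (k + q j) + u (k - q j) - 2 * u k)"
  unfolding dlap1_def q_def by (rule sum.cong) (auto simp: abs_if)

lemma dlap1_local:
  assumes "\<And>i. k - qmax \<le> i \<Longrightarrow> i \<le> k + qmax \<Longrightarrow> u i = v i"
  shows "dlap1 p u k = dlap1 p v k"
  unfolding dlap1_abs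
proof (rule sum.cong)
  fix j
  show "u (k + q j) + u (k - q j) - 2 * u k = v (k + q j) + v (k - q j) - 2 * v k"
    using assms[of "k + q j"] assms[of "k - q j"] assms[of k] q_nonneg[of j] q_le_qmax[of j]
    by auto
qed simp

section \<open>Maximum principle on a half-space\<close>

lemma idot_neighbour_ge:
  "idot p (y + unitv i) \<ge> idot p y - qmax" "idot p (y - unitv i) \<ge> idot p y - qmax"
  using q_le_qmax[of i] by (auto simp: idot_add idot_diff idot_unitv q_def)

lemma harnack_chain:
  assumes harm: "\<And>x. idot p x > 0 \<Longrightarrow> dlap \<phi> x = 0"
    and below: "\<And>z. idot p z \<ge> 1 - qmax \<Longrightarrow> \<phi> z \<le> S"
    and x: "idot p x > 0"
  shows "\<exists>z. idot p z \<ge> idot p x + int l \<and> S - \<phi> z \<le> (2 * real CARD('d)) ^ l * (S - \<phi> x)"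
proof (induction l)
  case (Suc l)
  then obtain z where z: "idot p z \<ge> idot p x + int l"
    and defect: "S - \<phi> z \<le> (2 * real CARD('d)) ^ l * (S - \<phi> x)"
    by blast
  obtain j where j: "p $ j \<noteq> 0" using nonzero by blast
  define e where "e = (if p $ j > 0 then unitv j else - unitv j)"
  have e: "e = unitv j \<or> e = - unitv j" unfolding e_def by auto
  have idot_e: "idot p e \<ge> 1" using j by (simp add: e_def idot_uminus idot_unitv)
  have zpos: "idot p z > 0" using x z by linarith
  have "\<phi> (z + unitv i) \<le> S" "\<phi> (z - unitv i) \<le> S" for i
    using idot_neighbour_ge[of z i] zpos by (auto intro!: below)
  then have "S - \<phi> (z + e) \<le> 2 * real CARD('d) * (S - \<phi> z)"
    by (intro harnack_neighbour[OF harm[OF zpos] e])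
  also have "\<dots> \<le> 2 * real CARD('d) * ((2 * real CARD('d)) ^ l * (S - \<phi> x))"
    using defect by (intro mult_left_mono) auto
  finally show ?case using z idot_e by (intro exI[of _ "z + e"]) (simp add: idot_add)
qed auto

text \<open>If the supremum \<open>S\<close> over the strip exceeded \<open>B\<close>, the Harnack chain would carry a point
  almost attaining \<open>S\<close> beyond level \<open>N\<close>, where \<open>\<phi> \<le> B\<close>.\<close>
lemma slab_max_principle:
  fixes \<phi> :: "int ^ 'd \<Rightarrow> real"
  assumes harm: "\<And>x. idot p x > 0 \<Longrightarrow> dlap \<phi> x = 0"
    and bdd: "\<And>z. idot p z \<ge> 1 - qmax \<Longrightarrow> \<phi> z \<le> M"
    and low: "\<And>z. 1 - qmax \<le> idot p z \<Longrightarrow> idot p z \<le> 0 \<Longrightarrow> \<phi> z \<le> B"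
    and high: "\<And>z. idot p z > N \<Longrightarrow> \<phi> z \<le> B"
    and y: "idot p y \<ge> 1 - qmax"
  shows "\<phi> y \<le> B"
proof -
  define R where "R = {z. idot p z \<ge> 1 - qmax}"
  define S where "S = Sup (\<phi> ` R)"
  have bddR: "bdd_above (\<phi> ` R)" using bdd by (intro bdd_aboveI) (auto simp: R_def)
  have le_S: "\<phi> z \<le> S" if "idot p z \<ge> 1 - qmax" for z
    unfolding S_def using bddR that by (intro cSup_upper) (auto simp: R_def)
  have "S \<le> B"
  proof (rule ccontr)
    assume "\<not> S \<le> B"
    then have SB: "S > B" by simp
    define D where "D = 2 * real CARD('d)"
    define L where "L = nat N"
    have D: "D \<ge> 2" unfolding D_def by simp
    define \<delta> where "\<delta> = (S - B) / D ^ (L + 1)"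
    have \<delta>pos: "\<delta> > 0" unfolding \<delta>_def using SB D by simp
    have "1 \<le> D ^ (L + 1)" using D by (intro one_le_power) auto
    then have \<delta>_le: "\<delta> \<le> (S - B) / 1"
      unfolding \<delta>_def using SB by (intro divide_left_mono) auto
    have "S - \<delta> < Sup (\<phi> ` R)" using \<delta>pos unfolding S_def by simp
    from less_cSupD[OF _ this] obtain x where xR: "x \<in> R" and x: "S - \<delta> < \<phi> x"
      using y unfolding R_def by blast
    have xpos: "idot p x > 0"
      using low[of x] xR x \<delta>_le unfolding R_def by force
    obtain z where z: "idot p z \<ge> idot p x + int L"
      and defect: "S - \<phi> z \<le> D ^ L * (S - \<phi> x)"
      using harnack_chain[OF harm le_S xpos] unfolding D_def by blast
    have "int L \<ge> N" unfolding L_def by simp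
    then have "\<phi> z \<le> B" using z xpos by (intro high) linarith
    then have "S - B \<le> D ^ L * (S - \<phi> x)" using defect by linarith
    also have "\<dots> < D ^ L * \<delta>" using x D by (intro mult_strict_left_mono) auto
    also have "\<dots> = (S - B) / D" unfolding \<delta>_def using D by (simp add: field_simps)
    also have "\<dots> \<le> (S - B) / 2" using SB D by (intro divide_left_mono) auto
    finally show False using SB by simp
  qed
  then show ?thesis using le_S[OF y] by simp
qed

text \<open>Tilting by \<open>-\<epsilon> p\<cdot>x\<close> makes the function nonpositive far from the boundary hyperplane, so
  the slab principle applies to the tilted function.\<close>
lemma halfspace_tilted_bound:
  fixes v :: "int ^ 'd \<Rightarrow> real"
  assumes harm: "\<And>x. idot p x > 0 \<Longrightarrow> dlap v x = 0"
    and bd: "\<And>x. idot p x \<le> 0 \<Longrightarrow> v x \<le> 0"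
    and ub: "\<And>x. idot p x > 0 \<Longrightarrow> v x \<le> M"
    and \<epsilon>: "\<epsilon> > 0" and x: "idot p x > 0"
  shows "v x \<le> \<epsilon> * real_of_int (idot p x + qmax)"
proof -
  define B where "B = \<epsilon> * real_of_int qmax"
  have B: "B \<ge> 0" unfolding B_def using \<epsilon> qmax_pos by simp
  define \<phi> where "\<phi> z = v z - \<epsilon> * real_of_int (idot p z)" for z
  have low: "\<phi> z \<le> B" if "1 - qmax \<le> idot p z" "idot p z \<le> 0" for z
    using bd[of z] that \<epsilon> mult_left_mono[of "- real_of_int (idot p z)" "real_of_int qmax" \<epsilon>]
    by (simp add: \<phi>_def B_def)
  have bdd: "\<phi> z \<le> max M 0 + B" if "idot p z \<ge> 1 - qmax" for z
  proof (cases "idot p z > 0")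
    case True
    then have "\<epsilon> * real_of_int (idot p z) \<ge> 0" using \<epsilon> by simp
    then show ?thesis using ub[OF True] B by (simp add: \<phi>_def)
  qed (use low[of z] that B max.cobounded2[of 0 M] in auto)
  have high: "\<phi> z \<le> B" if "idot p z > \<lceil>max M 0 / \<epsilon>\<rceil>" for z
  proof -
    have "max M 0 / \<epsilon> \<le> real_of_int (idot p z)" using that by linarith
    then have "max M 0 \<le> \<epsilon> * real_of_int (idot p z)" using \<epsilon> by (simp add: field_simps)
    moreover have "0 \<le> max M 0 / \<epsilon>" using \<epsilon> by simp
    then have "0 \<le> \<lceil>max M 0 / \<epsilon>\<rceil>" by linarith
    then have "idot p z > 0" using that by linarith
    ultimately show ?thesis using ub[of z] B by (simp add: \<phi>_def)
  qed
  have "\<phi> x \<le> B"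
    using x harm qmax_pos
    by (intro slab_max_principle[OF _ bdd low high]) (auto simp: \<phi>_def dlap_diff_idot)
  then show ?thesis by (simp add: \<phi>_def B_def distrib_left)
qed

lemma halfspace_max_principle:
  fixes v :: "int ^ 'd \<Rightarrow> real"
  assumes harm: "\<And>x. idot p x > 0 \<Longrightarrow> dlap v x = 0"
    and bd: "\<And>x. idot p x \<le> 0 \<Longrightarrow> v x \<le> 0"
    and ub: "\<And>x. idot p x > 0 \<Longrightarrow> v x \<le> M"
  shows "v x \<le> 0"
proof (cases "idot p x > 0")
  case True
  define K where "K = real_of_int (idot p x + qmax)"
  have K: "K > 0" using True qmax_pos unfolding K_def by linarith
  show ?thesis
  proof (rule field_le_epsilon)
    fix e :: real assume "e > 0"
    then have "e / K > 0" using K by simp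
    then have "v x \<le> e / K * real_of_int (idot p x + qmax)"
      by (intro halfspace_tilted_bound[where M=M] harm bd ub True)
    then show "v x \<le> 0 + e" using K by (simp add: K_def)
  qed
qed (use bd in auto)

lemma halfspace_sol_le:
  assumes u: "halfspace_sol p u" and u': "halfspace_sol p u'"
  shows "u' x \<le> u x"
proof -
  obtain M where M: "\<forall>x. idot p x > 0 \<longrightarrow> \<bar>u x - real_of_int (idot p x)\<bar> \<le> M"
    using u unfolding halfspace_sol_def by blast
  obtain M' where M': "\<forall>x. idot p x > 0 \<longrightarrow> \<bar>u' x - real_of_int (idot p x)\<bar> \<le> M'"
    using u' unfolding halfspace_sol_def by blast
  have "u' x - u x \<le> 0"
  proof (rule halfspace_max_principle)
    show "dlap (\<lambda>x. u' x - u x) y = 0" if "idot p y > 0" for y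
      using u u' that unfolding dlap_diff halfspace_sol_def by simp
    show "u' y - u y \<le> 0" if "idot p y \<le> 0" for y
      using u u' that unfolding halfspace_sol_def by simp
    show "u' y - u y \<le> M + M'" if "idot p y > 0" for y
      using M[rule_format, OF that] M'[rule_format, OF that] unfolding abs_le_iff by linarith
  qed
  then show ?thesis by simp
qed

lemma Hfun_eq_profile:
  assumes f0: "\<And>k. k \<le> 0 \<Longrightarrow> f k = 0"
    and harm: "\<And>k. k > 0 \<Longrightarrow> dlap1 p f k = 0"
    and bdd: "\<And>k. k > 0 \<Longrightarrow> \<bar>f k - real_of_int k\<bar> \<le> M"
  shows "Hfun p = dlap1 p f 0"
proof -
  define u where "u x = f (idot p x)" for x
  have u: "halfspace_sol p u"
    unfolding halfspace_sol_def u_def dlap_idot_comp using f0 harm bdd by (auto intro!: exI[of _ M])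
  have unique: "u' = u" if "halfspace_sol p u'" for u'
    by (rule ext, rule antisym) (intro halfspace_sol_le u that)+
  have "(THE u. halfspace_sol p u) = u"
    using u unique by (rule the_equality)
  then have "Hfun p = dlap u 0" by (simp add: Hfun_def)
  also have "\<dots> = dlap1 p f 0" using dlap_idot_comp[of f p 0] by (simp add: u_def[abs_def] idot_zero)
  finally show ?thesis .
qed

section \<open>Perron's method\<close>

definition perron_family :: "(int \<Rightarrow> real) \<Rightarrow> real \<Rightarrow> (int \<Rightarrow> real) set" where
  "perron_family \<phi> H = {v. (\<forall>k\<le>0. v k = \<phi> k) \<and> (\<forall>k>0. v k \<le> H \<and> dlap1 p v k \<ge> 0)}"

definition perron_sol :: "(int \<Rightarrow> real) \<Rightarrow> real \<Rightarrow> int \<Rightarrow> real" where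
  "perron_sol \<phi> H k = (if k \<le> 0 then \<phi> k else SUP v\<in>perron_family \<phi> H. v k)"

context
  fixes \<phi> :: "int \<Rightarrow> real" and lo H :: real
  assumes window: "\<And>k. 1 - qmax \<le> k \<Longrightarrow> k \<le> 0 \<Longrightarrow> lo \<le> \<phi> k \<and> \<phi> k \<le> H"
begin

lemma perron_family_const: "(\<lambda>k. if k \<le> 0 then \<phi> k else lo) \<in> perron_family \<phi> H"
  unfolding perron_family_def
proof (intro CollectI conjI allI impI)
  fix k :: int assume k: "k > 0"
  show "(if k \<le> 0 then \<phi> k else lo) \<le> H"
    using k window[of 0] qmax_pos by simp
  have "\<phi> (k - q j) \<ge> lo" if "k - q j \<le> 0" for j
    using window[of "k - q j"] that k q_le_qmax[of j] by simp
  moreover have "\<not> k + q j \<le> 0" for j using k q_nonneg[of j] by simp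
  ultimately show "dlap1 p (\<lambda>k. if k \<le> 0 then \<phi> k else lo) k \<ge> 0"
    unfolding dlap1_abs using k by (intro sum_nonneg) auto
qed simp

lemma perron_sol_ge: "v \<in> perron_family \<phi> H \<Longrightarrow> v k \<le> perron_sol \<phi> H k"
  unfolding perron_sol_def perron_family_def
  by (auto intro!: cSup_upper bdd_aboveI[of _ H])

lemma perron_sol_le:
  assumes "k > 0" and "\<And>v. v \<in> perron_family \<phi> H \<Longrightarrow> v k \<le> A"
  shows "perron_sol \<phi> H k \<le> A"
proof -
  have "(\<lambda>v. v k) ` perron_family \<phi> H \<noteq> {}" using perron_family_const by blast
  then have "(SUP v\<in>perron_family \<phi> H. v k) \<le> A" by (rule cSup_least) (auto intro: assms(2))
  then show ?thesis using assms(1) by (simp add: perron_sol_def)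
qed

lemma perron_sol_bounds:
  assumes k: "k > 0"
  shows "lo \<le> perron_sol \<phi> H k \<and> perron_sol \<phi> H k \<le> H"
proof
  show "lo \<le> perron_sol \<phi> H k" using perron_sol_ge[OF perron_family_const, of k] k by simp
  show "perron_sol \<phi> H k \<le> H" using k by (rule perron_sol_le) (use k in \<open>auto simp: perron_family_def\<close>)
qed

lemma perron_sol_le_window: "k \<ge> 1 - qmax \<Longrightarrow> perron_sol \<phi> H k \<le> H"
  using window perron_sol_bounds by (cases "k \<le> 0") (auto simp: perron_sol_def)

lemma perron_sol_subharmonic:
  assumes k: "k > 0"
  shows "dlap1 p (perron_sol \<phi> H) k \<ge> 0"
proof -
  define D where "D = real CARD('d)"
  have dlap1_D: "dlap1 p u k = (\<Sum>j\<in>UNIV. u (k + q j) + u (k - q j)) - 2 * D * u k" for u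
    unfolding dlap1_abs D_def by (simp add: sum_subtractf sum_distrib_left)
  define A where "A = (\<Sum>j\<in>UNIV. perron_sol \<phi> H (k + q j) + perron_sol \<phi> H (k - q j)) / (2 * D)"
  have "v k \<le> A" if "v \<in> perron_family \<phi> H" for v
  proof -
    have "dlap1 p v k \<ge> 0" using that k by (simp add: perron_family_def)
    then have "2 * D * v k \<le> (\<Sum>j\<in>UNIV. v (k + q j) + v (k - q j))" using dlap1_D by simp
    also have "\<dots> \<le> (\<Sum>j\<in>UNIV. perron_sol \<phi> H (k + q j) + perron_sol \<phi> H (k - q j))"
      by (intro sum_mono add_mono perron_sol_ge that)
    finally show ?thesis unfolding A_def D_def by (simp add: field_simps)
  qed
  then have "perron_sol \<phi> H k \<le> A" using k by (intro perron_sol_le)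
  then show ?thesis unfolding A_def D_def dlap1_D by (simp add: field_simps)
qed

lemma perron_sol_dlap1_le:
  assumes k: "k > 0"
  shows "dlap1 p (perron_sol \<phi> H) k \<le> 2 * real CARD('d) * (H - perron_sol \<phi> H k)"
proof -
  have "dlap1 p (perron_sol \<phi> H) k \<le> (\<Sum>j\<in>(UNIV :: 'd set). 2 * (H - perron_sol \<phi> H k))"
    unfolding dlap1_abs
  proof (rule sum_mono)
    fix j
    have "perron_sol \<phi> H (k + q j) \<le> H" "perron_sol \<phi> H (k - q j) \<le> H"
      using k q_nonneg[of j] q_le_qmax[of j] by (auto intro!: perron_sol_le_window)
    from add_mono[OF this]
    show "perron_sol \<phi> H (k + q j) + perron_sol \<phi> H (k - q j) - 2 * perron_sol \<phi> H k
        \<le> 2 * (H - perron_sol \<phi> H k)" by (simp add: algebra_simps)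
  qed
  then show ?thesis by (simp add: algebra_simps)
qed

text \<open>Maximality: raising a strictly subharmonic point by a small bump stays in the family.\<close>
lemma perron_sol_harmonic:
  assumes k: "k > 0"
  shows "dlap1 p (perron_sol \<phi> H) k = 0"
proof (rule ccontr)
  define h where "h = perron_sol \<phi> H"
  define D where "D = real CARD('d)"
  assume "dlap1 p (perron_sol \<phi> H) k \<noteq> 0"
  then have pos: "dlap1 p h k > 0" using perron_sol_subharmonic[OF k] unfolding h_def by simp
  define t where "t = dlap1 p h k / (2 * D)"
  have t: "t > 0" unfolding t_def D_def using pos by simp
  have t_le: "h k + t \<le> H"
    using perron_sol_dlap1_le[OF k] unfolding t_def D_def h_def by (simp add: field_simps)
  define y where "y i = (if i = k then t else 0)" for i
  have dlap1_y: "dlap1 p y i \<ge> (if i = k then - 2 * D * t else 0)" for i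
  proof -
    have "dlap1 p y i \<ge> (\<Sum>j\<in>(UNIV :: 'd set). if i = k then - 2 * t else 0)"
      unfolding dlap1_abs using t by (intro sum_mono) (auto simp: y_def)
    then show ?thesis by (simp add: D_def split: if_splits)
  qed
  have "(\<lambda>i. h i + y i) \<in> perron_family \<phi> H"
    unfolding perron_family_def
  proof (intro CollectI conjI allI impI)
    fix i :: int
    show "i \<le> 0 \<Longrightarrow> h i + y i = \<phi> i" using k by (simp add: h_def y_def perron_sol_def)
    show "i > 0 \<Longrightarrow> h i + y i \<le> H" using t_le perron_sol_bounds by (auto simp: h_def y_def)
    show "i > 0 \<Longrightarrow> dlap1 p (\<lambda>i. h i + y i) i \<ge> 0"
      using dlap1_y[of i] perron_sol_subharmonic[of i] unfolding dlap1_add h_def t_def D_def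
      by (auto split: if_splits)
  qed
  then have "h k + y k \<le> h k" unfolding h_def by (rule perron_sol_ge)
  then show False using t by (simp add: y_def)
qed

end

lemma bounded_harmonic_extension:
  fixes \<phi> :: "int \<Rightarrow> real"
  obtains h M where "\<And>k. k \<le> 0 \<Longrightarrow> h k = \<phi> k" "\<And>k. k > 0 \<Longrightarrow> dlap1 p h k = 0"
    "\<And>k. k > 0 \<Longrightarrow> \<bar>h k\<bar> \<le> M"
proof -
  define W where "W = \<phi> ` {1 - qmax..0}"
  have W: "finite W" "W \<noteq> {}" using qmax_pos unfolding W_def by auto
  have window: "Min W \<le> \<phi> k \<and> \<phi> k \<le> Max W" if "1 - qmax \<le> k" "k \<le> 0" for k
    using W that unfolding W_def by auto
  show ?thesis
  proof
    show "perron_sol \<phi> (Max W) k = \<phi> k" if "k \<le> 0" for k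
      using that by (simp add: perron_sol_def)
    show "dlap1 p (perron_sol \<phi> (Max W)) k = 0" if "k > 0" for k
      using perron_sol_harmonic[where \<phi>=\<phi> and lo="Min W" and H="Max W", OF window that] .
    show "\<bar>perron_sol \<phi> (Max W) k\<bar> \<le> \<bar>Min W\<bar> + \<bar>Max W\<bar>" if "k > 0" for k
      using perron_sol_bounds[where \<phi>=\<phi> and lo="Min W" and H="Max W", OF window that]
      by linarith
  qed
qed

section \<open>A discrete Wronskian\<close>

definition wronskian :: "(int \<Rightarrow> real) \<Rightarrow> (int \<Rightarrow> real) \<Rightarrow> int \<Rightarrow> real" where
  "wronskian u v n = (\<Sum>j\<in>UNIV. \<Sum>i<nat (q j).
      u (n - int i) * v (n - int i + q j) - u (n - int i + q j) * v (n - int i))"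

lemma wronskian_diff:
  "wronskian u v n - wronskian u v (n - 1) = u n * dlap1 p v n - v n * dlap1 p u n"
proof -
  define F where "F j s = u s * v (s + q j) - u (s + q j) * v s" for j s
  have telescope: "(\<Sum>i<nat (q j). F j (n - int i)) - (\<Sum>i<nat (q j). F j (n - 1 - int i))
             = F j n - F j (n - q j)" for j
  proof -
    have "(\<Sum>i<nat (q j). F j (n - int i)) - (\<Sum>i<nat (q j). F j (n - 1 - int i))
        = (\<Sum>i<nat (q j). F j (n - int i) - F j (n - int (Suc i)))"
      by (simp add: sum_subtractf algebra_simps)
    also have "\<dots> = F j n - F j (n - q j)"
      using sum_lessThan_telescope'[of "\<lambda>i. F j (n - int i)" "nat (q j)"] q_nonneg[of j] by simp
    finally show ?thesis .
  qed
  have "wronskian u v n - wronskian u v (n - 1) = (\<Sum>j\<in>UNIV. F j n - F j (n - q j))"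
    unfolding wronskian_def F_def[symmetric] telescope[symmetric]
    by (simp add: sum_subtractf algebra_simps)
  also have "\<dots> = u n * dlap1 p v n - v n * dlap1 p u n"
    unfolding dlap1_abs sum_distrib_left sum_subtractf[symmetric]
    by (rule sum.cong) (simp_all add: F_def algebra_simps)
  finally show ?thesis .
qed

lemma wronskian_eq_limit:
  assumes "\<And>k. k > 0 \<Longrightarrow> dlap1 p u k = 0" "\<And>k. k > 0 \<Longrightarrow> dlap1 p v k = 0"
    and lim: "(wronskian u v \<longlongrightarrow> L) at_top" and n: "n \<ge> 0"
  shows "wronskian u v n = L"
proof -
  have const: "wronskian u v n = wronskian u v 0" if "n \<ge> 0" for n
    using that
  proof (induction n rule: int_ge_induct)
    case (step i)
    then have "wronskian u v (i + 1) - wronskian u v (i + 1 - 1) = 0"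
      unfolding wronskian_diff using assms(1,2) by simp
    then show ?case using step by simp
  qed simp
  have "eventually (\<lambda>n. wronskian u v n = wronskian u v 0) at_top"
    using eventually_ge_at_top[of 0] by eventually_elim (rule const)
  then have "(wronskian u v \<longlongrightarrow> wronskian u v 0) at_top"
    by (rule tendsto_eventually)
  then show ?thesis using tendsto_unique[OF trivial_limit_at_top_linorder _ lim] const[OF n] by simp
qed

lemma wronskian_one_vanishes:
  assumes harm: "\<And>k. k > 0 \<Longrightarrow> dlap1 p v k = 0"
    and lim: "\<And>s. ((\<lambda>n. v (n + s)) \<longlongrightarrow> 0) at_top" and n: "n \<ge> 0"
  shows "wronskian (\<lambda>_. 1) v n = 0"
proof -
  have "(wronskian (\<lambda>_. 1) v \<longlongrightarrow> 0) at_top"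
    unfolding wronskian_def
  proof (intro tendsto_null_sum)
    fix j i
    have "((\<lambda>n. v (n + (q j - int i)) - v (n + - int i)) \<longlongrightarrow> 0 - 0) at_top"
      by (intro tendsto_diff lim)
    then show "((\<lambda>n. 1 * v (n - int i + q j) - 1 * v (n - int i)) \<longlongrightarrow> 0) at_top"
      by (simp add: algebra_simps)
  qed
  then show ?thesis using wronskian_eq_limit[OF _ harm _ n] by (simp add: dlap1_const)
qed

lemma wronskian_profile_at_zero:
  assumes f0: "\<And>k. k \<le> 0 \<Longrightarrow> f k = 0"
  shows "wronskian f (\<lambda>k. f (k + 1)) 0 = - f 1 * dlap1 p f 0"
proof -
  have "(\<Sum>i<nat (q j). f (0 - int i) * f (0 - int i + q j + 1) - f (0 - int i + q j) * f (0 - int i + 1))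
          = - f 1 * f (q j)" for j
  proof -
    have "(\<Sum>i<nat (q j). f (0 - int i) * f (0 - int i + q j + 1) - f (0 - int i + q j) * f (0 - int i + 1))
        = (\<Sum>i<nat (q j). if i = 0 then - f 1 * f (q j) else 0)"
      by (rule sum.cong) (use f0 in auto)
    then show ?thesis using f0 q_nonneg[of j] by (simp add: sum.delta)
  qed
  moreover have "dlap1 p f 0 = (\<Sum>j\<in>UNIV. f (q j))"
    unfolding dlap1_abs by (rule sum.cong) (use f0 q_nonneg in auto)
  ultimately show ?thesis unfolding wronskian_def by (simp add: sum_distrib_left)
qed

text \<open>With \<open>f(k) = k + e(k)\<close>, each term of the Wronskian of \<open>f\<close> and \<open>f(\<cdot> + 1)\<close> is \<open>-q\<^sub>j\<close> plus a
  remainder vanishing at infinity, plus \<open>n\<close> times a term of the Wronskian of \<open>1\<close> and the increments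
  \<open>D\<close> of \<open>e\<close>.\<close>
lemma wronskian_profile_decomp:
  fixes f :: "int \<Rightarrow> real"
  assumes lim: "((\<lambda>k. f k - real_of_int k) \<longlongrightarrow> c) at_top"
  defines "D \<equiv> \<lambda>k. (f (k + 1) - real_of_int (k + 1)) - (f k - real_of_int k)"
  obtains R where "\<And>n. wronskian f (\<lambda>k. f (k + 1)) n = - real_of_int (\<Sum>j\<in>UNIV. (p $ j)^2)
      + real_of_int n * wronskian (\<lambda>_. 1) D n + R n" and "(R \<longlongrightarrow> 0) at_top"
proof -
  define e where "e k = f k - real_of_int k" for k
  have e_shift: "((\<lambda>n. e (n + s)) \<longlongrightarrow> c) at_top" for s
    using tendsto_int_shift[OF lim] unfolding e_def .
  define R where "R j i n =
      - real i * (e (n + (q j - int i + 1)) - e (n + (q j - int i)) - e (n + (1 - int i)) + e (n + - int i))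
      - real_of_int (q j) * (e (n + (1 - int i)) - e (n + - int i)) + e (n + - int i) - e (n + (q j - int i))
      + e (n + - int i) * e (n + (q j - int i + 1)) - e (n + (q j - int i)) * e (n + (1 - int i))"
    for j i n
  have R_lim: "((\<lambda>n. R j i n) \<longlongrightarrow> 0) at_top" for j i
  proof -
    have "((\<lambda>n. R j i n) \<longlongrightarrow> - real i * (c - c - c + c) - real_of_int (q j) * (c - c) + c - c
        + c * c - c * c) at_top"
      unfolding R_def by (intro tendsto_intros e_shift)
    then show ?thesis by simp
  qed
  have expand: "f (n - int i) * f (n - int i + q j + 1) - f (n - int i + q j) * f (n - int i + 1)
      = - real_of_int (q j) + real_of_int n * (1 * D (n - int i + q j) - 1 * D (n - int i)) + R j i n"
    for n j i
    unfolding R_def D_def e_def by (simp add: algebra_simps)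
  have "wronskian f (\<lambda>k. f (k + 1)) n = - real_of_int (\<Sum>j\<in>UNIV. (q j)^2)
      + real_of_int n * wronskian (\<lambda>_. 1) D n + (\<Sum>j\<in>UNIV. \<Sum>i<nat (q j). R j i n)" for n
    unfolding wronskian_def expand sum.distrib sum_distrib_left using q_nonneg
    by (simp add: power2_eq_square sum_negf)
  moreover have "((\<lambda>n. \<Sum>j\<in>UNIV. \<Sum>i<nat (q j). R j i n) \<longlongrightarrow> 0) at_top"
    by (intro tendsto_null_sum R_lim)
  ultimately show ?thesis using that by (simp add: q_def)
qed

lemma wronskian_profile_tendsto:
  fixes f :: "int \<Rightarrow> real"
  assumes harm: "\<And>k. k > 0 \<Longrightarrow> dlap1 p f k = 0"
    and lim: "((\<lambda>k. f k - real_of_int k) \<longlongrightarrow> c) at_top"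
  shows "(wronskian f (\<lambda>k. f (k + 1)) \<longlongrightarrow> - real_of_int (\<Sum>j\<in>UNIV. (p $ j)^2)) at_top"
proof -
  define D where "D k = (f (k + 1) - real_of_int (k + 1)) - (f k - real_of_int k)" for k
  obtain R where decomp: "\<And>n. wronskian f (\<lambda>k. f (k + 1)) n = - real_of_int (\<Sum>j\<in>UNIV. (p $ j)^2)
      + real_of_int n * wronskian (\<lambda>_. 1) D n + R n" and R: "(R \<longlongrightarrow> 0) at_top"
    using wronskian_profile_decomp[OF lim] unfolding D_def[abs_def] by blast
  have "dlap1 p D k = dlap1 p (\<lambda>k. f (k + 1)) k - dlap1 p f k" for k
    unfolding D_def dlap1_diff[symmetric] by (simp add: dlap1_def algebra_simps)
  then have D_harm: "dlap1 p D k = 0" if "k > 0" for k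
    using harm that by (simp add: dlap1_shift)
  have "((\<lambda>n. D (n + s)) \<longlongrightarrow> c - c) at_top" for s
    using tendsto_diff[OF tendsto_int_shift[OF lim, of "s + 1"] tendsto_int_shift[OF lim, of s]]
    by (simp add: D_def add.assoc)
  then have W1D: "wronskian (\<lambda>_. 1) D n = 0" if "n \<ge> 0" for n
    using wronskian_one_vanishes[OF D_harm _ that] by simp
  have "eventually (\<lambda>n. - real_of_int (\<Sum>j\<in>UNIV. (p $ j)^2) + R n
      = wronskian f (\<lambda>k. f (k + 1)) n) at_top"
    using eventually_ge_at_top[of 0] by eventually_elim (simp add: decomp W1D)
  moreover have "((\<lambda>n. - real_of_int (\<Sum>j\<in>UNIV. (p $ j)^2) + R n)
      \<longlongrightarrow> - real_of_int (\<Sum>j\<in>UNIV. (p $ j)^2) + 0) at_top"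
    by (intro tendsto_add tendsto_const R)
  ultimately show ?thesis using tendsto_cong by force
qed

lemma profile_identity:
  assumes f0: "\<And>k. k \<le> 0 \<Longrightarrow> f k = 0"
    and harm: "\<And>k. k > 0 \<Longrightarrow> dlap1 p f k = 0"
    and lim: "((\<lambda>k. f k - real_of_int k) \<longlongrightarrow> c) at_top"
  shows "f 1 * dlap1 p f 0 = real_of_int (\<Sum>j\<in>UNIV. (p $ j)^2)"
proof -
  have shift_harm: "dlap1 p (\<lambda>k. f (k + 1)) k = 0" if "k > 0" for k
    using harm that by (simp add: dlap1_shift)
  have "wronskian f (\<lambda>k. f (k + 1)) 0 = - real_of_int (\<Sum>j\<in>UNIV. (p $ j)^2)"
    using harm shift_harm wronskian_profile_tendsto[OF harm lim] order_refl by (rule wronskian_eq_limit)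
  moreover have "wronskian f (\<lambda>k. f (k + 1)) 0 = - f 1 * dlap1 p f 0"
    by (rule wronskian_profile_at_zero[OF f0])
  ultimately show ?thesis by linarith
qed

end

section \<open>Windows and zeros of harmonic functions on the line\<close>

context nonzero_slope
begin

definition window_max :: "(int \<Rightarrow> real) \<Rightarrow> int \<Rightarrow> real" where
  "window_max h t = Max (h ` {t - qmax<..t})"

definition window_min :: "(int \<Rightarrow> real) \<Rightarrow> int \<Rightarrow> real" where
  "window_min h t = Min (h ` {t - qmax<..t})"

lemma window_nonempty: "t \<in> {t - qmax<..t}"
  using qmax_pos by simp

lemma window_bounds:
  "t - qmax < k \<Longrightarrow> k \<le> t \<Longrightarrow> window_min h t \<le> h k \<and> h k \<le> window_max h t"
  unfolding window_min_def window_max_def by auto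

lemma window_attained:
  obtains k1 k2 where "k1 \<in> {t - qmax<..t}" "h k1 = window_max h t"
    and "k2 \<in> {t - qmax<..t}" "h k2 = window_min h t"
proof -
  have fin: "finite (h ` {t - qmax<..t})" and ne: "h ` {t - qmax<..t} \<noteq> {}"
    using window_nonempty by auto
  obtain k1 where "k1 \<in> {t - qmax<..t}" "h k1 = window_max h t"
    using Max_in[OF fin ne] unfolding window_max_def by auto
  moreover obtain k2 where "k2 \<in> {t - qmax<..t}" "h k2 = window_min h t"
    using Min_in[OF fin ne] unfolding window_min_def by auto
  ultimately show ?thesis by (rule that)
qed

lemma harmonic_zero_spreads:
  assumes nonneg: "\<And>k. k > - qmax \<Longrightarrow> w k \<ge> 0"
    and harm: "dlap1 p w k = 0" and k: "k > 0" and wk: "w k = 0"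
  shows "w (k + q j) = 0 \<and> w (k - q j) = 0"
proof -
  have nn: "w (k + q i) \<ge> 0" "w (k - q i) \<ge> 0" for i
    using nonneg q_le_qmax[of i] q_nonneg[of i] k by auto
  have "(\<Sum>i\<in>UNIV. w (k + q i) + w (k - q i)) = 0"
    using harm wk unfolding dlap1_abs by simp
  then have "w (k + q j) + w (k - q j) = 0"
    using sum_nonneg_eq_0_iff[of UNIV "\<lambda>i. w (k + q i) + w (k - q i)"] nn
    by (simp add: add_nonneg_nonneg)
  then show ?thesis using nn[of j] by simp
qed

context
  fixes w :: "int \<Rightarrow> real"
  assumes spread: "\<And>k j. k > 0 \<Longrightarrow> w k = 0 \<Longrightarrow> w (k + q j) = 0 \<and> w (k - q j) = 0"
begin

lemma zero_ascent: "k > 0 \<Longrightarrow> w k = 0 \<Longrightarrow> w (k + int n * q j) = 0"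
proof (induction n)
  case (Suc n)
  have "k + int n * q j > 0" using Suc.prems q_nonneg[of j] by (simp add: add_pos_nonneg)
  with Suc have "w (k + int n * q j + q j) = 0" using spread by blast
  then show ?case by (simp add: algebra_simps)
qed simp

lemma zero_descent: "k \<ge> 0 \<Longrightarrow> w k = 0 \<Longrightarrow> k - int n * q j \<ge> 0 \<Longrightarrow> w (k - int n * q j) = 0"
proof (induction n)
  case (Suc n)
  have ge: "k - int n * q j \<ge> 0" using Suc.prems(3) q_nonneg[of j] by (simp add: algebra_simps)
  with Suc have zero: "w (k - int n * q j) = 0" by blast
  show ?case
  proof (cases "k - int n * q j > 0")
    case True
    then have "w (k - int n * q j - q j) = 0" using spread zero by blast
    then show ?thesis by (simp add: algebra_simps)
  next
    case False
    then have "q j = 0" using ge Suc.prems(3) q_nonneg[of j] by (simp add: algebra_simps)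
    then show ?thesis using zero by simp
  qed
qed simp

lemma zero_descent_sum:
  fixes M :: "'d \<Rightarrow> nat"
  assumes "finite J"
  shows "k \<ge> 0 \<Longrightarrow> w k = 0 \<Longrightarrow> k - (\<Sum>j\<in>J. int (M j) * q j) \<ge> 0
    \<Longrightarrow> w (k - (\<Sum>j\<in>J. int (M j) * q j)) = 0"
  using assms
proof (induction J arbitrary: k rule: finite_induct)
  case (insert j J)
  define k1 where "k1 = k - int (M j) * q j"
  have "(\<Sum>i\<in>J. int (M i) * q i) \<ge> 0" using q_nonneg by (intro sum_nonneg) simp
  then have k1: "k1 \<ge> 0" using insert.prems(3) insert.hyps unfolding k1_def by simp
  have "w k1 = 0" using insert.prems(1,2) k1 unfolding k1_def by (rule zero_descent)
  then have "w (k1 - (\<Sum>i\<in>J. int (M i) * q i)) = 0"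
    using insert k1 unfolding k1_def by (intro insert.IH) (simp_all add: algebra_simps)
  then show ?case using insert.hyps unfolding k1_def by (simp add: algebra_simps)
qed simp

end

end

locale primitive_slope =
  fixes p :: "int ^ 'd::finite"
  assumes Gcd_coords: "Gcd (range (\<lambda>i. p $ i)) = 1"

sublocale primitive_slope \<subseteq> nonzero_slope
proof
  show "\<exists>j. p $ j \<noteq> 0"
  proof (rule ccontr)
    assume "\<nexists>j. p $ j \<noteq> 0"
    then have "range (\<lambda>i. p $ i) = {0}" by auto
    then show False using Gcd_coords by simp
  qed
qed

context primitive_slope
begin

lemma idot_surj: "\<exists>x. idot p x = n"
proof -
  obtain c where c: "(\<Sum>j\<in>UNIV. c j * p $ j) = 1"
    using sum_combination_eq_Gcd[of UNIV "\<lambda>i. p $ i"] Gcd_coords by auto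
  have "idot p (\<chi> j. n * c j) = n * (\<Sum>j\<in>UNIV. c j * p $ j)"
    by (simp add: idot_def sum_distrib_left algebra_simps)
  then show ?thesis using c by auto
qed

text \<open>Lifting \<open>h\<close> to \<open>x \<mapsto> h (p \<cdot> x + t)\<close> turns the one-dimensional problem into the half-space one;
  surjectivity of \<open>x \<mapsto> p \<cdot> x\<close> makes the conclusion reach every \<open>k\<close>.\<close>
lemma line_max_principle:
  assumes harm: "\<And>k. k > t \<Longrightarrow> dlap1 p h k = 0"
    and window: "\<And>k. t - qmax < k \<Longrightarrow> k \<le> t \<Longrightarrow> h k \<le> 0"
    and ub: "\<And>k. k > t \<Longrightarrow> h k \<le> M"
    and k: "k > t"
  shows "h k \<le> 0"
proof -
  define h' where "h' k = (if k \<le> t - qmax then 0 else h k)" for k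
  define v where "v x = h' (idot p x + t)" for x
  have "v x \<le> 0" for x
  proof (rule halfspace_max_principle)
    fix x :: "int ^ 'd" assume x: "idot p x > 0"
    have "dlap v x = dlap1 p h' (idot p x + t)"
      unfolding v_def using dlap_idot_comp[of "\<lambda>n. h' (n + t)" p x] by (simp add: dlap1_shift)
    also have "\<dots> = dlap1 p h (idot p x + t)"
      by (rule dlap1_local) (use x in \<open>auto simp: h'_def\<close>)
    finally show "dlap v x = 0" using harm x by simp
    show "v x \<le> M" using ub x qmax_pos by (simp add: v_def h'_def)
  next
    show "v x \<le> 0" if "idot p x \<le> 0" for x using window that by (simp add: v_def h'_def)
  qed
  moreover obtain x where "idot p x = k - t" using idot_surj by blast
  ultimately have "h' k \<le> 0" unfolding v_def by (metis diff_add_cancel)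
  then show ?thesis using k qmax_pos by (simp add: h'_def)
qed

lemma line_sol_le:
  assumes g: "line_sol p g" and g': "line_sol p g'"
  shows "g' k \<le> g k"
proof (cases "k > 0")
  case True
  obtain M where M: "\<forall>k>0. \<bar>g k\<bar> \<le> M" using g unfolding line_sol_def by blast
  obtain M' where M': "\<forall>k>0. \<bar>g' k\<bar> \<le> M'" using g' unfolding line_sol_def by blast
  have "g' k - g k \<le> 0"
  proof (rule line_max_principle[where t=0 and M="M + M'", OF _ _ _ True])
    show "dlap1 p (\<lambda>k. g' k - g k) k = 0" if "k > 0" for k
      using g g' that unfolding dlap1_diff line_sol_def by simp
    show "g' k - g k \<le> 0" if "0 - qmax < k" "k \<le> 0" for k
      using g g' that unfolding line_sol_def by (cases "k = 0") auto
    show "g' k - g k \<le> M + M'" if "k > 0" for k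
      using M[rule_format, OF that] M'[rule_format, OF that] unfolding abs_le_iff by linarith
  qed
  then show ?thesis by simp
next
  case False
  then show ?thesis using g g' unfolding line_sol_def by (cases "k = 0") auto
qed

lemma line_sol_unique: "line_sol p g \<Longrightarrow> line_sol p g' \<Longrightarrow> g' = g"
  by (rule ext, rule antisym) (intro line_sol_le; assumption)+

text \<open>Strong minimum principle: a zero of \<open>w\<close> spreads along all steps \<open>\<plusminus>q\<^sub>j\<close>, and since these
  steps generate \<open>\<int>\<close>, the zero reaches the origin.\<close>
lemma harmonic_positive:
  assumes nonneg: "\<And>k. k > - qmax \<Longrightarrow> w k \<ge> 0"
    and harm: "\<And>k. k > 0 \<Longrightarrow> dlap1 p w k = 0"
    and w0: "w 0 > 0" and a: "a > 0"
  shows "w a > 0"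
proof (rule ccontr)
  assume "\<not> w a > 0"
  then have wa: "w a = 0" using nonneg[of a] a qmax_pos by simp
  have spread: "w (k + q j) = 0 \<and> w (k - q j) = 0" if "k > 0" "w k = 0" for k j
    using harmonic_zero_spreads[OF nonneg harm] that by blast
  obtain c where c: "(\<Sum>j\<in>UNIV. c j * p $ j) = 1"
    using sum_combination_eq_Gcd[of UNIV "\<lambda>i. p $ i"] Gcd_coords by auto
  define s where "s j = c j * sgn (p $ j)" for j
  have s: "(\<Sum>j\<in>UNIV. s j * q j) = 1"
    unfolding s_def q_def using c by (simp add: mult.assoc sgn_mult_abs)
  obtain j0 where "p $ j0 \<noteq> 0" using nonzero by blast
  then have qj0: "q j0 \<ge> 1" by (simp add: q_def)
  define K where "K = (\<Sum>j\<in>UNIV. \<bar>a * s j\<bar>)"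
  define Q where "Q = (\<Sum>j\<in>UNIV. q j)"
  have K: "\<bar>a * s j\<bar> \<le> K" for j unfolding K_def by (rule member_le_sum) auto
  have KQ: "K \<ge> 0" "Q \<ge> 0" unfolding K_def Q_def using q_nonneg by (simp_all add: sum_nonneg)
  define M where "M j = nat (a * s j + K * q j0)" for j
  have M: "int (M j) = a * s j + K * q j0" for j
    using K[of j] mult_le_cancel_left1[of K "q j0"] KQ qj0 unfolding M_def by auto
  define b where "b = a + int (nat (K * Q)) * q j0"
  have "w b = 0" unfolding b_def using spread a wa by (rule zero_ascent)
  moreover have "b - (\<Sum>j\<in>UNIV. int (M j) * q j) = 0"
  proof -
    have "(\<Sum>j\<in>UNIV. int (M j) * q j) = a * (\<Sum>j\<in>UNIV. s j * q j) + K * q j0 * Q"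
      unfolding M Q_def by (simp add: algebra_simps sum.distrib sum_distrib_left)
    then show ?thesis unfolding b_def s using KQ by (simp add: algebra_simps)
  qed
  moreover have "b \<ge> 0" unfolding b_def using a q_nonneg[of j0] by simp
  ultimately have "w 0 = 0" using zero_descent_sum[OF spread, of UNIV b M] by force
  then show False using w0 by simp
qed

lemma harmonic_measure:
  obtains w where "\<And>k. k \<le> 0 \<Longrightarrow> w k = (if k = 0 then 1 else 0)"
    "\<And>k. k > 0 \<Longrightarrow> dlap1 p w k = 0" "\<And>k. k > 0 \<Longrightarrow> 0 < w k \<and> w k \<le> 1"
proof -
  obtain w M where w0: "\<And>k. k \<le> 0 \<Longrightarrow> w k = (if k = 0 then 1 else 0)"
    and harm: "\<And>k. k > 0 \<Longrightarrow> dlap1 p w k = 0" and bdd: "\<And>k. k > 0 \<Longrightarrow> \<bar>w k\<bar> \<le> M"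
    using bounded_harmonic_extension[of "\<lambda>k. if k = 0 then 1 else 0"] by blast
  have nonneg: "w k \<ge> 0" if "k > - qmax" for k
  proof (cases "k > 0")
    case True
    have "- w k \<le> 0"
    proof (rule line_max_principle[where t=0 and M=M, OF _ _ _ True])
      show "dlap1 p (\<lambda>k. - w k) k = 0" if "k > 0" for k using harm that by (simp add: dlap1_minus)
    qed (use w0 bdd in \<open>auto simp: abs_le_iff\<close>)
    then show ?thesis by simp
  qed (use w0 in auto)
  have le1: "w k \<le> 1" if "k > 0" for k
  proof -
    have "w k - 1 \<le> 0"
    proof (rule line_max_principle[where t=0 and M="M - 1", OF _ _ _ that])
      show "dlap1 p (\<lambda>k. w k - 1) k = 0" if "k > 0" for k
        using harm that by (simp add: dlap1_diff dlap1_const)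
    qed (use w0 bdd in \<open>auto simp: abs_le_iff\<close>)
    then show ?thesis by simp
  qed
  have "w k > 0" if "k > 0" for k using harmonic_positive[OF nonneg harm] w0 that by simp
  with that w0 harm le1 show ?thesis by blast
qed

lemma window_bound_propagates:
  assumes harm: "\<And>k. k > t \<Longrightarrow> dlap1 p h k = 0" and ub: "\<And>k. k > t \<Longrightarrow> h k \<le> M"
    and window: "\<And>k. t - qmax < k \<Longrightarrow> k \<le> t \<Longrightarrow> h k \<le> H" and k: "k > t"
  shows "h k \<le> H"
  using line_max_principle[of t "\<lambda>k. h k - H" "M - H" k] harm ub window k
  by (simp add: dlap1_diff dlap1_const)

text \<open>Comparison with \<open>H - (H - h t) w(\<cdot> - t)\<close>, where \<open>w\<close> is the harmonic measure of the origin.\<close>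
lemma window_bound_improves:
  assumes w0: "\<And>k. k \<le> 0 \<Longrightarrow> w k = (if k = 0 then 1 else 0)"
    and w_harm: "\<And>k. k > 0 \<Longrightarrow> dlap1 p w k = 0" and w_le: "\<And>k. k > 0 \<Longrightarrow> w k \<le> 1"
    and harm: "\<And>k. k > t \<Longrightarrow> dlap1 p h k = 0" and ub: "\<And>k. k > t \<Longrightarrow> h k \<le> M"
    and window: "\<And>k. t - qmax < k \<Longrightarrow> k \<le> t \<Longrightarrow> h k \<le> H"
    and k: "k > t" and \<delta>: "\<delta> \<le> w (k - t)"
  shows "h k \<le> H - \<delta> * (H - h t)"
proof -
  define c where "c = H - h t"
  have c: "c \<ge> 0" unfolding c_def using window[of t] qmax_pos by simp
  have "1 * h k + c * w (k + - t) + - H \<le> 0"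
  proof (rule line_max_principle[where M="M + c - H", OF _ _ _ k])
    show "dlap1 p (\<lambda>k. 1 * h k + c * w (k + - t) + - H) i = 0" if "i > t" for i
      unfolding dlap1_affine_comb using harm w_harm that by simp
    show "1 * h i + c * w (i + - t) + - H \<le> 0" if "t - qmax < i" "i \<le> t" for i
      using window[OF that] that w0[of "i - t"] by (cases "i = t") (auto simp: c_def)
    show "1 * h i + c * w (i + - t) + - H \<le> M + c - H" if "i > t" for i
      using ub[OF that] mult_left_mono[OF w_le[of "i - t"] c] that by simp
  qed
  moreover have "c * \<delta> \<le> c * w (k - t)" using \<delta> c by (rule mult_left_mono)
  ultimately show ?thesis unfolding c_def by (simp add: algebra_simps)
qed

lemma window_brackets:
  assumes harm: "\<And>k. k > 0 \<Longrightarrow> dlap1 p h k = 0" and bdd: "\<And>k. k > 0 \<Longrightarrow> \<bar>h k\<bar> \<le> M"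
    and t: "t \<ge> 0" and k: "k > t"
  shows "window_min h t \<le> h k \<and> h k \<le> window_max h t"
proof
  show "h k \<le> window_max h t"
    by (rule window_bound_propagates[where M=M, OF _ _ _ k])
      (use harm bdd t window_bounds in \<open>auto simp: abs_le_iff\<close>)
  have "- h k \<le> - window_min h t"
    by (rule window_bound_propagates[where h="\<lambda>k. - h k" and M=M, OF _ _ _ k])
      (use harm bdd t window_bounds in \<open>auto simp: abs_le_iff dlap1_minus\<close>)
  then show "window_min h t \<le> h k" by simp
qed

lemma window_oscillation_contracts:
  assumes w0: "\<And>k. k \<le> 0 \<Longrightarrow> w k = (if k = 0 then 1 else 0)"
    and w_harm: "\<And>k. k > 0 \<Longrightarrow> dlap1 p w k = 0" and w_le: "\<And>k. k > 0 \<Longrightarrow> w k \<le> 1"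
    and \<delta>: "\<And>a. 1 \<le> a \<Longrightarrow> a \<le> qmax \<Longrightarrow> \<delta> \<le> w a"
    and harm: "\<And>k. k > 0 \<Longrightarrow> dlap1 p h k = 0" and bdd: "\<And>k. k > 0 \<Longrightarrow> \<bar>h k\<bar> \<le> M"
    and t: "t \<ge> 0"
  shows "window_max h (t + qmax) - window_min h (t + qmax) \<le> (1 - \<delta>) * (window_max h t - window_min h t)"
proof -
  obtain k1 k2 where k1: "k1 \<in> {t + qmax - qmax<..t + qmax}" "h k1 = window_max h (t + qmax)"
    and k2: "k2 \<in> {t + qmax - qmax<..t + qmax}" "h k2 = window_min h (t + qmax)"
    by (rule window_attained)
  have "h k1 \<le> window_max h t - \<delta> * (window_max h t - h t)"
    by (rule window_bound_improves[OF w0 w_harm w_le, where M=M])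
      (use k1 harm bdd t window_bounds \<delta> in \<open>auto simp: abs_le_iff\<close>)
  moreover have "- h k2 \<le> - window_min h t - \<delta> * (- window_min h t - - h t)"
    by (rule window_bound_improves[OF w0 w_harm w_le, where h="\<lambda>k. - h k" and M=M])
      (use k2 harm bdd t window_bounds \<delta> in \<open>auto simp: abs_le_iff dlap1_minus\<close>)
  ultimately show ?thesis using k1(2) k2(2) by (simp add: algebra_simps)
qed

lemma bounded_harmonic_converges:
  assumes harm: "\<And>k. k > 0 \<Longrightarrow> dlap1 p h k = 0" and bdd: "\<And>k. k > 0 \<Longrightarrow> \<bar>h k\<bar> \<le> M"
  shows "\<exists>L. (h \<longlongrightarrow> L) at_top"
proof -
  obtain w where w0: "\<And>k. k \<le> 0 \<Longrightarrow> w k = (if k = 0 then 1 else 0)"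
    and w_harm: "\<And>k. k > 0 \<Longrightarrow> dlap1 p w k = 0" and w_pos: "\<And>k. k > 0 \<Longrightarrow> 0 < w k \<and> w k \<le> 1"
    using harmonic_measure by blast
  define \<delta> where "\<delta> = Min (w ` {1..qmax})"
  have fin: "finite (w ` {1..qmax})" and ne: "w ` {1..qmax} \<noteq> {}" using qmax_pos by auto
  have \<delta>_le: "\<delta> \<le> w a" if "1 \<le> a" "a \<le> qmax" for a
    unfolding \<delta>_def using fin that by (intro Min_le) auto
  have \<delta>: "0 < \<delta>" "\<delta> \<le> 1"
    using Min_in[OF fin ne] w_pos unfolding \<delta>_def by fastforce+
  define t where "t n = int n * qmax" for n
  have t: "t n \<ge> 0" "t (Suc n) = t n + qmax" for n
    using qmax_pos by (simp_all add: t_def algebra_simps)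
  define osc where "osc n = window_max h (t n) - window_min h (t n)" for n
  have osc_le: "osc n \<le> (1 - \<delta>) ^ n * osc 0" for n
  proof (induction n)
    case (Suc n)
    have "osc (Suc n) \<le> (1 - \<delta>) * osc n" unfolding osc_def t(2)
      using w_pos by (intro window_oscillation_contracts[OF w0 w_harm _ \<delta>_le harm bdd t(1)]) auto
    also have "\<dots> \<le> (1 - \<delta>) * ((1 - \<delta>) ^ n * osc 0)" using Suc \<delta> by (intro mult_left_mono) auto
    finally show ?case by simp
  qed simp
  have osc_nonneg: "osc n \<ge> 0" for n
    unfolding osc_def using window_bounds[of "t n" "t n" h] qmax_pos by simp
  have bound: "(\<lambda>n. (1 - \<delta>) ^ n * osc 0) \<longlonglongrightarrow> 0"
    using \<delta> by (intro tendsto_mult_left_zero LIMSEQ_power_zero) auto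
  have osc_lim: "osc \<longlonglongrightarrow> 0"
    by (rule tendsto_sandwich[OF _ _ tendsto_const bound])
      (use osc_nonneg osc_le in \<open>auto intro: always_eventually\<close>)
  show ?thesis
  proof (rule tendsto_of_shrinking_brackets)
    show "window_min h (t n) \<le> h k \<and> h k \<le> window_max h (t n)" if "k > t n" for n k
      using window_brackets[OF harm bdd t(1) that] .
    show "(\<lambda>n. window_max h (t n) - window_min h (t n)) \<longlonglongrightarrow> 0" using osc_lim unfolding osc_def .
  qed
qed

lemma linear_profile:
  obtains f M c where "\<And>k. k \<le> 0 \<Longrightarrow> f k = 0" "\<And>k. k > 0 \<Longrightarrow> dlap1 p f k = 0"
    "\<And>k. k > 0 \<Longrightarrow> \<bar>f k - real_of_int k\<bar> \<le> M" "((\<lambda>k. f k - real_of_int k) \<longlongrightarrow> c) at_top"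
proof -
  obtain e M where e0: "\<And>k. k \<le> 0 \<Longrightarrow> e k = - real_of_int k"
    and harm: "\<And>k. k > 0 \<Longrightarrow> dlap1 p e k = 0" and bdd: "\<And>k. k > 0 \<Longrightarrow> \<bar>e k\<bar> \<le> M"
    using bounded_harmonic_extension[of "\<lambda>k. - real_of_int k"] by blast
  obtain c where lim: "(e \<longlongrightarrow> c) at_top" using bounded_harmonic_converges[OF harm bdd] by blast
  define f where "f k = real_of_int k + e k" for k
  show thesis
  proof (rule that[of f M c])
    show "f k = 0" if "k \<le> 0" for k using e0 that by (simp add: f_def)
    show "dlap1 p f k = 0" if "k > 0" for k
      using harm that dlap1_add[of p real_of_int e k] by (simp add: f_def[abs_def] dlap1_of_int)
    show "\<bar>f k - real_of_int k\<bar> \<le> M" if "k > 0" for k using bdd that by (simp add: f_def)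
    show "((\<lambda>k. f k - real_of_int k) \<longlongrightarrow> c) at_top" using lim by (simp add: f_def)
  qed
qed

end

theorem mainTheorem6:
  fixes p :: "int ^ 'd"
  assumes "Gcd (range (\<lambda>i. p $ i)) = 1"
  shows "(\<exists>!g. line_sol p g) \<and>
         (\<forall>g. line_sol p g \<longrightarrow>
            (\<exists>L. (g \<longlongrightarrow> L) at_top \<and>
                 Hfun p = real_of_int (\<Sum>i\<in>UNIV. (p $ i)^2) * L))"
proof -
  interpret primitive_slope p by unfold_locales (rule assms)
  obtain f M c where f0: "\<And>k. k \<le> 0 \<Longrightarrow> f k = 0" and harm: "\<And>k. k > 0 \<Longrightarrow> dlap1 p f k = 0"
    and bdd: "\<And>k. k > 0 \<Longrightarrow> \<bar>f k - real_of_int k\<bar> \<le> M"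
    and lim: "((\<lambda>k. f k - real_of_int k) \<longlongrightarrow> c) at_top"
    using linear_profile by blast
  have identity: "f 1 * Hfun p = real_of_int (\<Sum>i\<in>UNIV. (p $ i)^2)"
    using profile_identity[OF f0 harm lim] Hfun_eq_profile[OF f0 harm bdd] by simp
  have "real_of_int (\<Sum>i\<in>UNIV. (p $ i)^2) > 0" using coord_squares_pos by (rule of_int_pos)
  then have f1: "f 1 \<noteq> 0" using identity by (auto simp del: of_int_sum of_int_power)
  define g where "g k = (f (k + 1) - f k) / f 1" for k
  have g: "line_sol p g"
    unfolding g_def[abs_def] using f0 harm bdd f1 by (rule line_sol_profile_quotient)
  have "(g \<longlongrightarrow> 1 / f 1) at_top" unfolding g_def[abs_def] using lim by (rule profile_quotient_limit)
  moreover have "Hfun p = real_of_int (\<Sum>i\<in>UNIV. (p $ i)^2) * (1 / f 1)"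
    using identity f1 by (simp add: field_simps)
  ultimately have L: "\<exists>L. (g \<longlongrightarrow> L) at_top \<and> Hfun p = real_of_int (\<Sum>i\<in>UNIV. (p $ i)^2) * L"
    by blast
  show ?thesis
  proof (intro conjI allI impI)
    show "\<exists>!g. line_sol p g" using g line_sol_unique[OF g] by (rule ex1I)
    fix g' assume "line_sol p g'"
    then have "g' = g" by (rule line_sol_unique[OF g])
    then show "\<exists>L. (g' \<longlongrightarrow> L) at_top \<and> Hfun p = real_of_int (\<Sum>i\<in>UNIV. (p $ i)^2) * L"
      using L by simp
  qed
qed

end
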